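(* Let $C$ be an $n\times n$ lower-triangular Toeplitz matrix whose diagonal entries satisfy $c_0\ge c_1\ge\cdots\ge c_{n-1}\ge0$ (entry $(i,j)$ equals $c_{i-j}$ for $i\ge j$). Let $k,b\ge1$ be integers with $(k-1)b\le n-1$. Then $$\mathrm{sens}_{k,b}(C)^2\le k\,\|C\|_{1\to2}^2+\frac{k}{b}\,\|C\|_{1\to1}^2 .$$
   Context: For an $n\times n$ matrix $C$ and integers $k,b\ge1$ with $(k-1)b\le n-1$, $\mathrm{sens}_{k,b}(C):=\bigl\|\sum_{j=0}^{k-1}C_{[\cdot,jb]}\bigr\|_2$, where $C_{[\cdot,m]}$ is the $m$-th column of $C$ with columns indexed from $0$; for $C$ as in the claim this equals $\sqrt{\sum_{i=0}^{n-1}\bigl[\sum_{j=0}^{\min(k-1,\lfloor i/b\rfloor)}c_{i-jb}\bigr]^2}$ and is the sensitivity under $b$-min-separated participation. For a matrix $M$, $\|M\|_{1\to1}$ is the maximum $\ell_1$ norm of a column of $M$ and $\|M\|_{1\to2}$ is the maximum $\ell_2$ norm of a column of $M$. *)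

theory Defs
  imports Complex_Main
begin

text \<open>An n x n real matrix is represented as a function nat => nat => real,
  entry (i,j) with 0 <= i,j < n (rows i, columns j, indexed from 0).\<close>

definition lower_toeplitz :: "(nat \<Rightarrow> real) \<Rightarrow> nat \<Rightarrow> nat \<Rightarrow> real" where
  "lower_toeplitz c i j = (if j \<le> i then c (i - j) else 0)"

definition col_l1 :: "nat \<Rightarrow> (nat \<Rightarrow> nat \<Rightarrow> real) \<Rightarrow> nat \<Rightarrow> real" where
  "col_l1 n M m = (\<Sum>i<n. \<bar>M i m\<bar>)"

definition col_l2 :: "nat \<Rightarrow> (nat \<Rightarrow> nat \<Rightarrow> real) \<Rightarrow> nat \<Rightarrow> real" where
  "col_l2 n M m = sqrt (\<Sum>i<n. (M i m)^2)"

text \<open>Operator norms ||M||_{1->1} and ||M||_{1->2}: maximal column norms.\<close>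
definition norm_1_1 :: "nat \<Rightarrow> (nat \<Rightarrow> nat \<Rightarrow> real) \<Rightarrow> real" where
  "norm_1_1 n M = Max ((\<lambda>m. col_l1 n M m) ` {..<n})"

definition norm_1_2 :: "nat \<Rightarrow> (nat \<Rightarrow> nat \<Rightarrow> real) \<Rightarrow> real" where
  "norm_1_2 n M = Max ((\<lambda>m. col_l2 n M m) ` {..<n})"

definition sens :: "nat \<Rightarrow> nat \<Rightarrow> nat \<Rightarrow> (nat \<Rightarrow> nat \<Rightarrow> real) \<Rightarrow> real" where
  "sens n k b M = sqrt (\<Sum>i<n. (\<Sum>j<k. M i (j * b))^2)"

end

theory Submission imports Defs begin

text \<open>Write \<open>x i j = c (i - j b)\<close> for entry \<open>(i, j b)\<close> of \<open>C\<close>, so that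
  \<open>sens\<^sup>2 = \<Sum>i. (\<Sum>j. x i j)\<^sup>2\<close>. Expanding the square pairs each \<open>x i j = c u\<close>,
  \<open>u = i - j b\<close>, with the entries \<open>c (u + b), c (u + 2 b), \<dots>\<close> of the earlier columns.
  As \<open>c\<close> is non-increasing, each of these is at most the mean of \<open>c\<close> over the \<open>b\<close>
  indices up to it, so together they are at most \<open>T u / b\<close> with the tail sum
  \<open>T u = \<Sum>s>u. c s\<close>. Hence each column contributes at most
  \<open>\<Sum>u. c u\<^sup>2 + 2 c u T u / b \<le> \<Sum>u. c u\<^sup>2 + (\<Sum>u. c u)\<^sup>2 / b\<close>, and the two sums are the
  squared \<open>\<ell>\<^sub>2\<close> and \<open>\<ell>\<^sub>1\<close> norms of the first column of \<open>C\<close>.\<close>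

lemma square_sum_eq_sum_earlier_products:
  fixes x :: "nat \<Rightarrow> real"
  shows "(\<Sum>j<k. x j)\<^sup>2 = (\<Sum>j<k. (x j)\<^sup>2 + 2 * x j * (\<Sum>j'<j. x j'))"
  by (induction k) (simp_all add: power2_eq_square algebra_simps)

lemma two_sum_later_products_le_square:
  fixes e :: "nat \<Rightarrow> real"
  shows "2 * (\<Sum>u<m. e u * (\<Sum>s\<in>{Suc u..<m}. e s)) \<le> (\<Sum>u<m. e u)\<^sup>2"
proof (induction m)
  case 0
  then show ?case by simp
next
  case (Suc m)
  have "(\<Sum>u<Suc m. e u * (\<Sum>s\<in>{Suc u..<Suc m}. e s))
      = (\<Sum>u<m. e u * (\<Sum>s\<in>{Suc u..<m}. e s) + e u * e m)"
    by (simp, rule sum.cong) (auto simp: algebra_simps)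
  also have "\<dots> = (\<Sum>u<m. e u * (\<Sum>s\<in>{Suc u..<m}. e s)) + (\<Sum>u<m. e u) * e m"
    by (simp add: sum.distrib sum_distrib_right)
  finally have "(\<Sum>u<Suc m. e u * (\<Sum>s\<in>{Suc u..<Suc m}. e s))
      = (\<Sum>u<m. e u * (\<Sum>s\<in>{Suc u..<m}. e s)) + (\<Sum>u<m. e u) * e m" .
  moreover have "(\<Sum>u<Suc m. e u)\<^sup>2 = (\<Sum>u<m. e u)\<^sup>2 + 2 * (\<Sum>u<m. e u) * e m + (e m)\<^sup>2"
    by (simp add: power2_eq_square algebra_simps)
  ultimately show ?case
    using Suc.IH zero_le_power2[of "e m"] by linarith
qed

lemma sum_lower_toeplitz_column:
  "(\<Sum>i<n. lower_toeplitz g i m) = (\<Sum>u<n - m. g u)"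
  by (induction n) (auto simp: lower_toeplitz_def Suc_diff_le not_less_eq_eq)

lemma antitone_sum_block_bound:
  fixes e :: "nat \<Rightarrow> real"
  assumes "\<And>s t. s \<le> t \<Longrightarrow> t \<le> u + j * b \<Longrightarrow> e t \<le> e s"
  shows "real b * (\<Sum>m<j. e (u + Suc m * b)) \<le> (\<Sum>s\<in>{Suc u..<Suc u + j * b}. e s)"
  using assms
proof (induction j)
  case 0
  then show ?case by simp
next
  case (Suc j)
  have "real b * e (u + Suc j * b) = (\<Sum>s\<in>{Suc u + j * b..<Suc u + Suc j * b}. e (u + Suc j * b))"
    by simp
  also have "\<dots> \<le> (\<Sum>s\<in>{Suc u + j * b..<Suc u + Suc j * b}. e s)"
    by (rule sum_mono) (auto intro: Suc.prems)
  finally have last_block: "real b * e (u + Suc j * b) \<le> (\<Sum>s\<in>{Suc u + j * b..<Suc u + Suc j * b}. e s)" .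
  have "real b * (\<Sum>m<j. e (u + Suc m * b)) \<le> (\<Sum>s\<in>{Suc u..<Suc u + j * b}. e s)"
    using Suc.prems by (intro Suc.IH) auto
  with last_block have "real b * (\<Sum>m<Suc j. e (u + Suc m * b))
      \<le> (\<Sum>s\<in>{Suc u..<Suc u + j * b}. e s) + (\<Sum>s\<in>{Suc u + j * b..<Suc u + Suc j * b}. e s)"
    by (simp add: distrib_left)
  also have "\<dots> = (\<Sum>s\<in>{Suc u..<Suc u + Suc j * b}. e s)"
    by (rule sum.atLeastLessThan_concat) simp_all
  finally show ?case .
qed

definition tail_weight :: "nat \<Rightarrow> (nat \<Rightarrow> real) \<Rightarrow> nat \<Rightarrow> nat \<Rightarrow> real" where
  "tail_weight n c b u = (c u)\<^sup>2 + 2 / real b * c u * (\<Sum>s\<in>{Suc u..<n}. c s)"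

context
  fixes n :: nat and c :: "nat \<Rightarrow> real"
  assumes mono: "\<And>i j. i \<le> j \<Longrightarrow> j < n \<Longrightarrow> c j \<le> c i"
    and nonneg: "\<And>i. i < n \<Longrightarrow> 0 \<le> c i"
begin

lemma lower_toeplitz_earlier_columns_le_tail:
  assumes "i < n" and "j * b \<le> i"
  shows "real b * (\<Sum>j'<j. lower_toeplitz c i (j' * b)) \<le> (\<Sum>s\<in>{Suc (i - j * b)..<n}. c s)"
proof -
  define u where "u = i - j * b"
  have "(\<Sum>j'<j. lower_toeplitz c i (j' * b)) = (\<Sum>j'<j. c (u + Suc (j - Suc j') * b))"
  proof (rule sum.cong)
    fix j' assume "j' \<in> {..<j}"
    then have "j' < j" by simp
    then have "j' * b \<le> j * b" and "Suc (j - Suc j') = j - j'" by auto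
    with assms(2) have "j' * b \<le> i" and "i - j' * b = u + (j - j') * b"
      by (linarith, simp add: u_def diff_mult_distrib)
    then show "lower_toeplitz c i (j' * b) = c (u + Suc (j - Suc j') * b)"
      using \<open>Suc (j - Suc j') = j - j'\<close> by (simp add: lower_toeplitz_def)
  qed simp
  also have "\<dots> = (\<Sum>m<j. c (u + Suc m * b))"
    by (rule sum.nat_diff_reindex)
  finally have "real b * (\<Sum>j'<j. lower_toeplitz c i (j' * b)) = real b * (\<Sum>m<j. c (u + Suc m * b))"
    by simp
  also have "\<dots> \<le> (\<Sum>s\<in>{Suc u..<Suc u + j * b}. c s)"
    by (rule antitone_sum_block_bound) (use assms in \<open>auto simp: u_def intro: mono\<close>)
  also have "\<dots> \<le> (\<Sum>s\<in>{Suc u..<n}. c s)"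
    using assms by (intro sum_mono2) (auto simp: u_def intro: nonneg)
  finally show ?thesis by (simp add: u_def)
qed

lemma lower_toeplitz_row_square_le:
  assumes "i < n" and "b > 0"
  shows "(\<Sum>j<k. lower_toeplitz c i (j * b))\<^sup>2 \<le> (\<Sum>j<k. lower_toeplitz (tail_weight n c b) i (j * b))"
  unfolding square_sum_eq_sum_earlier_products
proof (rule sum_mono)
  fix j
  show "(lower_toeplitz c i (j * b))\<^sup>2
      + 2 * lower_toeplitz c i (j * b) * (\<Sum>j'<j. lower_toeplitz c i (j' * b))
    \<le> lower_toeplitz (tail_weight n c b) i (j * b)"
  proof (cases "j * b \<le> i")
    case True
    define u where "u = i - j * b"
    have "(\<Sum>j'<j. lower_toeplitz c i (j' * b)) \<le> (\<Sum>s\<in>{Suc u..<n}. c s) / real b"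
      using lower_toeplitz_earlier_columns_le_tail[OF assms(1) True] assms(2)
      by (simp add: u_def field_simps)
    moreover have "0 \<le> c u"
      using assms(1) by (intro nonneg) (simp add: u_def)
    ultimately have "2 * c u * (\<Sum>j'<j. lower_toeplitz c i (j' * b))
        \<le> 2 * c u * ((\<Sum>s\<in>{Suc u..<n}. c s) / real b)"
      by (intro mult_left_mono) auto
    then show ?thesis
      using True by (simp add: lower_toeplitz_def tail_weight_def u_def)
  qed (simp add: lower_toeplitz_def)
qed

lemma sens_lower_toeplitz_square_le:
  assumes "b > 0"
  shows "(sens n k b (lower_toeplitz c))\<^sup>2
    \<le> real k * (\<Sum>u<n. (c u)\<^sup>2) + real k / real b * (\<Sum>u<n. c u)\<^sup>2"
proof -
  define T where "T u = (\<Sum>s\<in>{Suc u..<n}. c s)" for u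
  have weight_nonneg: "0 \<le> tail_weight n c b u" if "u < n" for u
    using that nonneg unfolding tail_weight_def
    by (intro add_nonneg_nonneg mult_nonneg_nonneg sum_nonneg) auto
  have "(sens n k b (lower_toeplitz c))\<^sup>2 = (\<Sum>i<n. (\<Sum>j<k. lower_toeplitz c i (j * b))\<^sup>2)"
    unfolding sens_def by (simp add: sum_nonneg)
  also have "\<dots> \<le> (\<Sum>i<n. \<Sum>j<k. lower_toeplitz (tail_weight n c b) i (j * b))"
    using assms by (intro sum_mono lower_toeplitz_row_square_le) auto
  also have "\<dots> = (\<Sum>j<k. \<Sum>u<n - j * b. tail_weight n c b u)"
    by (subst sum.swap) (simp add: sum_lower_toeplitz_column)
  also have "\<dots> \<le> (\<Sum>j<k. \<Sum>u<n. tail_weight n c b u)"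
    by (intro sum_mono sum_mono2) (auto intro: weight_nonneg)
  also have "\<dots> = real k * ((\<Sum>u<n. (c u)\<^sup>2) + (2 * (\<Sum>u<n. c u * T u)) / real b)"
    by (simp add: tail_weight_def T_def sum.distrib sum_distrib_left sum_divide_distrib mult.assoc)
  also have "\<dots> \<le> real k * ((\<Sum>u<n. (c u)\<^sup>2) + (\<Sum>u<n. c u)\<^sup>2 / real b)"
    using two_sum_later_products_le_square[of c n] assms
    by (intro mult_left_mono add_left_mono divide_right_mono) (simp_all add: T_def)
  finally show ?thesis
    by (simp add: algebra_simps)
qed

end

lemma col_l1_lower_toeplitz_0:
  assumes "\<And>i. i < n \<Longrightarrow> 0 \<le> c i"
  shows "col_l1 n (lower_toeplitz c) 0 = (\<Sum>u<n. c u)"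
  unfolding col_l1_def lower_toeplitz_def by (rule sum.cong) (auto simp: assms)

lemma col_l2_lower_toeplitz_0: "col_l2 n (lower_toeplitz c) 0 = sqrt (\<Sum>u<n. (c u)\<^sup>2)"
  by (simp add: col_l2_def lower_toeplitz_def)

lemma col_l1_le_norm_1_1: "m < n \<Longrightarrow> col_l1 n M m \<le> norm_1_1 n M"
  unfolding norm_1_1_def by (rule Max_ge) auto

lemma col_l2_le_norm_1_2: "m < n \<Longrightarrow> col_l2 n M m \<le> norm_1_2 n M"
  unfolding norm_1_2_def by (rule Max_ge) auto

theorem mainTheorem2:
  fixes n k b :: nat and c :: "nat \<Rightarrow> real"
  assumes "n \<ge> 1"
    and mono: "\<And>i j. i \<le> j \<Longrightarrow> j < n \<Longrightarrow> c j \<le> c i"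
    and nonneg: "\<And>i. i < n \<Longrightarrow> c i \<ge> 0"
    and "k \<ge> 1" and "b \<ge> 1"
    and "(k - 1) * b \<le> n - 1"
  shows "(sens n k b (lower_toeplitz c))^2
           \<le> real k * (norm_1_2 n (lower_toeplitz c))^2
             + real k / real b * (norm_1_1 n (lower_toeplitz c))^2"
proof -
  let ?C = "lower_toeplitz c"
  have "(sens n k b ?C)\<^sup>2 \<le> real k * (\<Sum>u<n. (c u)\<^sup>2) + real k / real b * (\<Sum>u<n. c u)\<^sup>2"
    using assms(5) sens_lower_toeplitz_square_le[OF mono nonneg, where b=b and k=k] by simp
  moreover have "(\<Sum>u<n. (c u)\<^sup>2) = (col_l2 n ?C 0)\<^sup>2"
    by (simp add: col_l2_lower_toeplitz_0 sum_nonneg)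
  moreover have "\<dots> \<le> (norm_1_2 n ?C)\<^sup>2"
    using assms(1) by (intro power_mono col_l2_le_norm_1_2) (auto simp: col_l2_def sum_nonneg)
  moreover have "0 \<le> (\<Sum>u<n. c u)"
    using nonneg by (intro sum_nonneg) simp
  then have "(\<Sum>u<n. c u)\<^sup>2 \<le> (norm_1_1 n ?C)\<^sup>2"
    using assms(1) col_l1_le_norm_1_1[of 0 n ?C]
    by (intro power_mono) (simp_all add: col_l1_lower_toeplitz_0[OF nonneg])
  ultimately have "(sens n k b ?C)\<^sup>2
      \<le> real k * (norm_1_2 n ?C)\<^sup>2 + real k / real b * (norm_1_1 n ?C)\<^sup>2"
    by (smt (verit) divide_nonneg_nonneg mult_left_mono of_nat_0_le_iff)
  then show ?thesis by simp
qed

end
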